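(* Let $p\in(0,1)$ and let $(\lambda_n)_{n\ge1}$ be a sequence with $\lambda_1=1$ and $0\le\lambda_n\le\lambda_{n-1}$ for all $n>1$. Let $r_1,r_2,\dots$ be $\{0,1\}$-valued random variables with $\Pr(r_1=1)=p$ and, for every $n\ge2$, $\Pr(r_n=1\mid r_1,\dots,r_{n-1})=\lambda_n p+(1-\lambda_n)\bar p_{n-1}$, where $\bar p_m=\frac1m\sum_{i=1}^m r_i$. Then for all integers $1\le m<n$, \[\mathbb{E}[\bar p_n-p\mid\bar p_m]=(\bar p_m-p)\prod_{i=m+1}^{n}\Big(1-\frac{\lambda_i}{i}\Big).\] *)

theory Defs
  imports "HOL-Probability.Probability"
begin

definition gen_alg :: "'a measure \<Rightarrow> (nat \<Rightarrow> 'a \<Rightarrow> real) \<Rightarrow> nat set \<Rightarrow> 'a measure" where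
  "gen_alg M X I = sigma (space M) {X i -` B \<inter> space M | i B. i \<in> I \<and> B \<in> sets borel}"

definition pbar :: "(nat \<Rightarrow> 'a \<Rightarrow> real) \<Rightarrow> nat \<Rightarrow> 'a \<Rightarrow> real" where
  "pbar r m x = (\<Sum>i=1..m. r i x) / real m"

end

theory Submission
  imports Defs
begin

(* Write F k for the sigma-algebra generated by r 1, ..., r k and c i = 1 - lam i / i.
   Since r (j+1) is {0,1}-valued, its conditional expectation given F j is the prescribed
   probability lam (j+1) p + (1 - lam (j+1)) pbar j; inserting this into
   pbar (j+1) = (j pbar j + r (j+1)) / (j+1) gives E[pbar (j+1) - p | F j] = c (j+1) (pbar j - p).
   Iterating with the tower property yields E[pbar n - p | F m] = (pbar m - p) (prod c), and as
   this is already a function of pbar m, conditioning further on the coarser sigma-algebra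
   generated by pbar m does not change it. *)

lemma space_gen_alg [simp]: "space (gen_alg M X I) = space M"
  unfolding gen_alg_def by (simp add: space_measure_of_conv)

lemma sets_gen_alg:
  "sets (gen_alg M X I) = sigma_sets (space M) {X i -` B \<inter> space M | i B. i \<in> I \<and> B \<in> sets borel}"
  unfolding gen_alg_def by (rule sets_measure_of) auto

lemma subalgebra_gen_alg:
  assumes "\<And>i. i \<in> I \<Longrightarrow> X i \<in> borel_measurable M"
  shows "subalgebra M (gen_alg M X I)"
  unfolding subalgebra_def space_gen_alg sets_gen_alg
  by (auto intro!: sets.sigma_sets_subset measurable_sets assms)

lemma subalgebra_gen_alg_mono:
  assumes "I \<subseteq> J"
  shows "subalgebra (gen_alg M X J) (gen_alg M X I)"
  unfolding subalgebra_def space_gen_alg sets_gen_alg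
  using assms by (intro conjI refl sigma_sets_subseteq) blast

lemma measurable_gen_alg:
  assumes "i \<in> I"
  shows "X i \<in> borel_measurable (gen_alg M X I)"
proof (rule measurableI)
  fix B :: "real set" assume "B \<in> sets borel"
  then show "X i -` B \<inter> space (gen_alg M X I) \<in> sets (gen_alg M X I)"
    unfolding space_gen_alg sets_gen_alg using assms by (intro sigma_sets.Basic) blast
qed auto

lemma subalgebra_vimage_algebra:
  assumes "f \<in> borel_measurable F"
  shows "subalgebra F (vimage_algebra (space F) f borel)"
  using sets_image_in_sets[OF refl assms] by (simp add: subalgebra_def)

lemma borel_measurable_pbar:
  assumes "\<And>i. i \<in> {1..k} \<Longrightarrow> r i \<in> borel_measurable N"
  shows "pbar r k \<in> borel_measurable N"
  unfolding pbar_def[abs_def] using assms by (intro borel_measurable_divide borel_measurable_sum) auto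

lemma pbar_Suc:
  assumes "1 \<le> j"
  shows "pbar r (Suc j) x = real j / real (Suc j) * pbar r j x + r (Suc j) x / real (Suc j)"
  using assms unfolding pbar_def by (simp add: sum.cl_ivl_Suc add_divide_distrib)

lemma (in finite_measure) integrable_zero_one_valued:
  fixes f :: "'a \<Rightarrow> real"
  assumes "f \<in> borel_measurable M" and "\<And>x. x \<in> space M \<Longrightarrow> f x \<in> {0, 1}"
  shows "integrable M f"
proof (rule integrable_const_bound[where B = 1])
  show "AE x in M. norm (f x) \<le> 1"
    using assms(2) by (intro AE_I2) fastforce
qed (fact assms(1))

lemma (in finite_measure) integrable_pbar:
  assumes "\<And>i. i \<in> {1..k} \<Longrightarrow> r i \<in> borel_measurable M"
    and "\<And>i x. i \<in> {1..k} \<Longrightarrow> x \<in> space M \<Longrightarrow> r i x \<in> {0, 1}"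
  shows "integrable M (pbar r k)"
proof -
  have "integrable M (r i)" if "i \<in> {1..k}" for i
    using assms that by (intro integrable_zero_one_valued) auto
  then show ?thesis
    unfolding pbar_def[abs_def] by (intro integrable_divide_zero integrable_sum) auto
qed

lemma (in sigma_finite_subalgebra) real_cond_exp_affine:
  fixes a X :: "'a \<Rightarrow> real" and b :: real
  assumes "integrable M a" "a \<in> borel_measurable F" "integrable M X"
  shows "AE x in M. real_cond_exp M F (\<lambda>x. a x + b * X x) x = a x + b * real_cond_exp M F X x"
proof -
  have "AE x in M. real_cond_exp M F (\<lambda>x. a x + b * X x) x
      = real_cond_exp M F a x + real_cond_exp M F (\<lambda>x. b * X x) x"
    using assms by (intro real_cond_exp_add) auto
  moreover have "AE x in M. real_cond_exp M F a x = a x"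
    using assms(1,2) by (rule real_cond_exp_F_meas)
  moreover have "AE x in M. real_cond_exp M F (\<lambda>x. b * X x) x = b * real_cond_exp M F X x"
    using assms by (intro real_cond_exp_cmult)
  ultimately show ?thesis by eventually_elim simp
qed

lemma (in finite_measure) real_cond_exp_iterate:
  fixes F :: "nat \<Rightarrow> 'a measure" and Y :: "nat \<Rightarrow> 'a \<Rightarrow> real" and c :: "nat \<Rightarrow> real"
  assumes sub: "\<And>k. subalgebra M (F k)"
    and mono: "\<And>j k. k \<le> j \<Longrightarrow> subalgebra (F j) (F k)"
    and adapted: "Y m \<in> borel_measurable (F m)"
    and int: "\<And>k. integrable M (Y k)"
    and recursion: "\<And>j. m \<le> j \<Longrightarrow>
                 AE x in M. real_cond_exp M (F j) (Y (Suc j)) x = c (Suc j) * Y j x"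
    and "m \<le> n"
  shows "AE x in M. real_cond_exp M (F m) (Y n) x = Y m x * (\<Prod>i\<in>{m+1..n}. c i)"
proof -
  interpret Fm: finite_measure_subalgebra M "F m"
    using sub by unfold_locales
  show ?thesis
    using \<open>m \<le> n\<close>
  proof (induction n rule: dec_induct)
    case base
    show ?case
      using Fm.real_cond_exp_F_meas[OF int adapted] by simp
  next
    case (step j)
    have prod_Suc: "(\<Prod>i\<in>{m+1..Suc j}. c i) = c (Suc j) * (\<Prod>i\<in>{m+1..j}. c i)"
      using step.hyps(1) by (simp add: atLeastAtMostSuc_conv)
    have "AE x in M. real_cond_exp M (F m) (real_cond_exp M (F j) (Y (Suc j))) x
        = real_cond_exp M (F m) (Y (Suc j)) x"
      using sub mono[OF step.hyps(1)] int by (rule Fm.real_cond_exp_nested_subalg)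
    moreover have "AE x in M. real_cond_exp M (F m) (real_cond_exp M (F j) (Y (Suc j))) x
        = real_cond_exp M (F m) (\<lambda>x. c (Suc j) * Y j x) x"
      using recursion[OF step.hyps(1)] int by (intro Fm.real_cond_exp_cong) auto
    moreover have "AE x in M. real_cond_exp M (F m) (\<lambda>x. c (Suc j) * Y j x) x
        = c (Suc j) * real_cond_exp M (F m) (Y j) x"
      using int by (rule Fm.real_cond_exp_cmult)
    ultimately show ?case
      using step.IH unfolding prod_Suc by eventually_elim (simp add: algebra_simps)
  qed
qed

lemma (in finite_measure) real_cond_exp_coarser:
  assumes sub_F: "subalgebra M F" and sub_G: "subalgebra F G" and "integrable M f"
    and cond_F: "AE x in M. real_cond_exp M F f x = g x" and g_G: "g \<in> borel_measurable G"
  shows "AE x in M. real_cond_exp M G f x = g x"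
proof -
  have "subalgebra M G"
    using sub_F sub_G unfolding subalgebra_def by auto
  then interpret G: finite_measure_subalgebra M G
    by unfold_locales
  have g_M: "g \<in> borel_measurable M"
    using measurable_from_subalg[OF \<open>subalgebra M G\<close> g_G] .
  interpret F: finite_measure_subalgebra M F
    using sub_F by unfold_locales
  have "integrable M g"
    using F.real_cond_exp_int(1)[OF \<open>integrable M f\<close>] g_M cond_F
    by (rule integrable_cong_AE_imp)
  have "AE x in M. real_cond_exp M G f x = real_cond_exp M G (real_cond_exp M F f) x"
    using G.real_cond_exp_nested_subalg[OF sub_F sub_G \<open>integrable M f\<close>] by (rule AE_symmetric)
  moreover have "AE x in M. real_cond_exp M G (real_cond_exp M F f) x = real_cond_exp M G g x"
    using cond_F borel_measurable_cond_exp2 g_M by (rule G.real_cond_exp_cong)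
  moreover have "AE x in M. real_cond_exp M G g x = g x"
    using \<open>integrable M g\<close> g_G by (rule G.real_cond_exp_F_meas)
  ultimately show ?thesis by eventually_elim simp
qed

lemma (in prob_space) real_cond_exp_pbar_Suc:
  assumes meas: "\<And>i. 1 \<le> i \<Longrightarrow> r i \<in> borel_measurable M"
    and vals: "\<And>i x. 1 \<le> i \<Longrightarrow> x \<in> space M \<Longrightarrow> r i x \<in> {0, 1}"
    and law: "AE x in M. real_cond_exp M (gen_alg M r {1..j})
                (indicator {x \<in> space M. r (Suc j) x = 1}) x = l * p + (1 - l) * pbar r j x"
    and "1 \<le> j"
  shows "AE x in M. real_cond_exp M (gen_alg M r {1..j}) (\<lambda>x. pbar r (Suc j) x - p) x
           = (1 - l / real (Suc j)) * (pbar r j x - p)"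
proof -
  let ?F = "gen_alg M r {1..j}"
  interpret F: finite_measure_subalgebra M ?F
    using meas by unfold_locales (auto intro: subalgebra_gen_alg)
  define a where "a x = real j / real (Suc j) * pbar r j x - p" for x
  define b where "b = 1 / real (Suc j)"
  have a_F: "a \<in> borel_measurable ?F"
    unfolding a_def[abs_def] by (intro borel_measurable_diff borel_measurable_times
        borel_measurable_pbar measurable_gen_alg) auto
  have int_a: "integrable M a"
    unfolding a_def[abs_def] using meas vals by (intro Bochner_Integration.integrable_diff
        integrable_mult_right integrable_pbar) auto
  have int_r: "integrable M (r (Suc j))"
    using meas vals by (intro integrable_zero_one_valued) auto
  have decomp: "(\<lambda>x. pbar r (Suc j) x - p) = (\<lambda>x. a x + b * r (Suc j) x)"
    using pbar_Suc[OF \<open>1 \<le> j\<close>] unfolding a_def b_def by fastforce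
  have "AE x in M. real_cond_exp M ?F (\<lambda>x. a x + b * r (Suc j) x) x
      = a x + b * real_cond_exp M ?F (r (Suc j)) x"
    using int_a a_F int_r by (rule F.real_cond_exp_affine)
  moreover have "AE x in M. real_cond_exp M ?F (r (Suc j)) x
      = real_cond_exp M ?F (indicator {x \<in> space M. r (Suc j) x = 1}) x"
    using vals[of "Suc j"] meas[of "Suc j"]
    by (intro F.real_cond_exp_cong AE_I2) (auto simp: indicator_def)
  ultimately show ?thesis
    using law unfolding decomp
  proof eventually_elim
    case (elim x)
    have "a x + b * (l * p + (1 - l) * pbar r j x) = (1 - l / real (Suc j)) * (pbar r j x - p)"
    proof -
      define N where "N = real (Suc j)"
      have "real j = N - 1" "N \<noteq> 0"
        unfolding N_def by simp_all
      then show ?thesis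
        unfolding a_def b_def N_def[symmetric] by (simp only:) (simp add: field_simps)
    qed
    with elim show ?case by (simp only:)
  qed
qed

lemma (in prob_space) real_cond_exp_pbar:
  assumes meas: "\<And>i. 1 \<le> i \<Longrightarrow> r i \<in> borel_measurable M"
    and vals: "\<And>i x. 1 \<le> i \<Longrightarrow> x \<in> space M \<Longrightarrow> r i x \<in> {0, 1}"
    and law: "\<And>n. 2 \<le> n \<Longrightarrow>
           AE x in M. real_cond_exp M (gen_alg M r {1..n-1})
                        (indicator {x \<in> space M. r n x = 1}) x
                      = lam n * p + (1 - lam n) * pbar r (n - 1) x"
    and "1 \<le> m" and "m \<le> n"
  shows "AE x in M. real_cond_exp M (gen_alg M r {1..m}) (\<lambda>x. pbar r n x - p) x
           = (pbar r m x - p) * (\<Prod>i\<in>{m+1..n}. 1 - lam i / real i)"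
proof (rule real_cond_exp_iterate[where F = "\<lambda>k. gen_alg M r {1..k}"
      and Y = "\<lambda>k x. pbar r k x - p"])
  fix j assume "m \<le> j"
  with \<open>1 \<le> m\<close> have "1 \<le> j" by simp
  have law_j: "AE x in M. real_cond_exp M (gen_alg M r {1..j})
        (indicator {x \<in> space M. r (Suc j) x = 1}) x
      = lam (Suc j) * p + (1 - lam (Suc j)) * pbar r j x"
    using law[of "Suc j"] \<open>1 \<le> j\<close> by simp
  show "AE x in M. real_cond_exp M (gen_alg M r {1..j}) (\<lambda>x. pbar r (Suc j) x - p) x
      = (1 - lam (Suc j) / real (Suc j)) * (pbar r j x - p)"
    by (rule real_cond_exp_pbar_Suc[where r = r]) (fact meas vals law_j \<open>1 \<le> j\<close>)+
next
  show "subalgebra M (gen_alg M r {1..k})" for k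
    using meas by (intro subalgebra_gen_alg) auto
  show "subalgebra (gen_alg M r {1..j}) (gen_alg M r {1..k})" if "k \<le> j" for j k
    using that by (intro subalgebra_gen_alg_mono) auto
  show "(\<lambda>x. pbar r m x - p) \<in> borel_measurable (gen_alg M r {1..m})"
    by (intro borel_measurable_diff borel_measurable_pbar measurable_gen_alg) auto
  show "integrable M (\<lambda>x. pbar r k x - p)" for k
    using meas vals by (intro Bochner_Integration.integrable_diff integrable_pbar) auto
qed (fact \<open>m \<le> n\<close>)

theorem propositionA7:
  fixes M :: "'a measure" and r :: "nat \<Rightarrow> 'a \<Rightarrow> real"
    and lam :: "nat \<Rightarrow> real" and p :: real
  assumes "prob_space M"
    and "0 < p" and "p < 1"
    and "lam 1 = 1"
    and "\<And>n. n > 1 \<Longrightarrow> 0 \<le> lam n \<and> lam n \<le> lam (n - 1)"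
    and "\<And>n. n \<ge> 1 \<Longrightarrow> r n \<in> borel_measurable M"
    and "\<And>n x. n \<ge> 1 \<Longrightarrow> x \<in> space M \<Longrightarrow> r n x \<in> {0, 1}"
    and "measure M {x \<in> space M. r 1 x = 1} = p"
    and "\<And>n. n \<ge> 2 \<Longrightarrow>
           AE x in M. real_cond_exp M (gen_alg M r {1..n-1})
                        (indicator {x \<in> space M. r n x = 1}) x
                      = lam n * p + (1 - lam n) * pbar r (n - 1) x"
    and "1 \<le> m" and "m < n"
  shows "AE x in M. real_cond_exp M (vimage_algebra (space M) (pbar r m) borel)
                      (\<lambda>x. pbar r n x - p) x
                    = (pbar r m x - p) * (\<Prod>i\<in>{m+1..n}. 1 - lam i / real i)"
proof -
  interpret prob_space M by fact
  note meas = assms(6) and vals = assms(7)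
  let ?F = "gen_alg M r {1..m}" and ?V = "vimage_algebra (space M) (pbar r m) borel"
  have pbar_F: "pbar r m \<in> borel_measurable ?F"
    by (intro borel_measurable_pbar measurable_gen_alg) auto
  have "subalgebra M ?F"
    using meas by (intro subalgebra_gen_alg) auto
  moreover have "subalgebra ?F ?V"
    using subalgebra_vimage_algebra[OF pbar_F] by simp
  moreover have "integrable M (\<lambda>x. pbar r n x - p)"
    using meas vals by (intro Bochner_Integration.integrable_diff integrable_pbar) auto
  moreover have "AE x in M. real_cond_exp M ?F (\<lambda>x. pbar r n x - p) x
      = (pbar r m x - p) * (\<Prod>i\<in>{m+1..n}. 1 - lam i / real i)"
    using meas vals assms(9) \<open>1 \<le> m\<close> \<open>m < n\<close> by (intro real_cond_exp_pbar) auto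
  moreover have "(\<lambda>x. (pbar r m x - p) * (\<Prod>i\<in>{m+1..n}. 1 - lam i / real i))
      \<in> borel_measurable ?V"
    using measurable_vimage_algebra1[of "pbar r m" "space M" borel] by simp
  ultimately show ?thesis
    by (rule real_cond_exp_coarser)
qed

end
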